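(* Let $k\geq 2$ and $n\geq k+1$ be integers. Then in $\mathcal{H}$, $$ \sum_{\substack{r, s_i\geq 1,\ s_1\geq 2\\ r+s_1+\cdots +s_{k-1}=n}} z_{r}\,\tilde{\sqcup}\, z_{s_1,\dots, s_{k-1}} = \sum_{\substack{t_i\geq 1\\ t_1+\cdots+t_{k}=n }} \big[ C(t_1,\dots, t_{k-1})- C(t_2,\dots, t_{k-1})\big] z_{t_1,\dots, t_{k}} - \sum_{ \substack{ t_i\geq 1,\ t_2=1 \\ t_1+\cdots+t_{k}=n }} z_{t_1,\dots, t_{k}}, $$ with the convention $C(t_2,\dots,t_{k-1})=C(\emptyset)=1$ when $k=2$.
   Context: Let $\mathcal{H}$ be the free $\mathbb{Z}$-module on words in letters $z_s$ ($s\geq1$), with $z_{s_1,\dots,s_k}:=z_{s_1}\cdots z_{s_k}$ and $1$ the empty word. Let $\mathbb{Z}\langle x_0,x_1\rangle$ be the free $\mathbb{Z}$-module on words in two letters $x_0,x_1$, with the shuffle product $\sqcup$ defined bilinearly and recursively by $1\sqcup u=u\sqcup 1=u$ and $(au)\sqcup(bv)=a(u\sqcup (bv))+b((au)\sqcup v)$ for letters $a,b\in\{x_0,x_1\}$ and words $u,v$. Let $\rho$ be the $\mathbb{Z}$-linear bijection from $\mathbb{Z}\oplus \mathbb{Z}\langle x_0,x_1\rangle x_1$ (span of $1$ and words ending in $x_1$) onto $\mathcal{H}$ given by $\rho(1)=1$ and $\rho(x_0^{s_1-1}x_1\cdots x_0^{s_k-1}x_1)=z_{s_1,\dots,s_k}$.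 Define the product $\tilde{\sqcup}$ on $\mathcal{H}$ by $w_1\,\tilde{\sqcup}\,w_2=\rho\big(\rho^{-1}(w_1)\sqcup\rho^{-1}(w_2)\big)$. For $m\geq 1$ and positive integers $t_1,\dots,t_{m}$ with $T_j=t_1+\cdots+t_j$, set $C(t_1,\dots,t_{m})=\sum_{j=1}^{m}2^{T_j-j}+2^{T_{m}-m}$; also $C(\emptyset)=1$. In particular $C(t_2,\dots,t_{k-1})$ denotes this quantity applied to the tuple $(t_2,\dots,t_{k-1})$. *)

theory Defs
  imports Main "HOL-Library.Function_Algebras"
begin

text \<open>Elements of the free Z-module H are represented by their coefficient functions
  nat list \<Rightarrow> int; the word z_{s1,...,sk} is the list [s1,...,sk] of positive integers.
  Words in x0, x1 are bool lists with x0 = False, x1 = True.\<close>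

type_synonym hword = "nat list"
type_synonym helt = "hword \<Rightarrow> int"

definition zb :: "hword \<Rightarrow> helt" where
  "zb u = (\<lambda>w. if w = u then 1 else 0)"

definition scal :: "int \<Rightarrow> helt \<Rightarrow> helt" where
  "scal c f = (\<lambda>w. c * f w)"

text \<open>Shuffle of two words, as a list of words counted with multiplicity.\<close>
fun shuf :: "'a list \<Rightarrow> 'a list \<Rightarrow> 'a list list" where
  "shuf [] v = [v]"
| "shuf u [] = [u]"
| "shuf (a # u) (b # v) = map ((#) a) (shuf u (b # v)) @ map ((#) b) (shuf (a # u) v)"

text \<open>rho inverse: z_{s1..sk} \<mapsto> x0^(s1-1) x1 ... x0^(sk-1) x1.\<close>
definition enc :: "hword \<Rightarrow> bool list" where
  "enc ss = concat (map (\<lambda>s. replicate (s - 1) False @ [True]) ss)"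

text \<open>z_u tilde-shuffle z_v = rho(rho^-1(z_u) shuffle rho^-1(z_v)); the coefficient of z_w
  is the multiplicity of rho^-1(z_w) in the shuffle.\<close>
definition shz :: "hword \<Rightarrow> hword \<Rightarrow> helt" where
  "shz u v = (\<lambda>w. if (\<forall>x\<in>set w. 0 < x)
                 then int (count_list (shuf (enc u) (enc v)) (enc w)) else 0)"

definition Cf :: "nat list \<Rightarrow> int" where
  "Cf ts = (if ts = [] then 1 else
     (\<Sum>j=1..length ts. 2 ^ (sum_list (take j ts) - j)) + 2 ^ (sum_list ts - length ts))"

end

theory Submission imports Defs begin

text \<open>Since shuffling is adjoint to unshuffling, the coefficient of \<open>z\<^sub>w\<close> on the left-hand side
  is the number of ways to split the word \<open>\<rho>\<^sup>-\<^sup>1(z\<^sub>w)\<close> into two complementary subsequences, the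
  first of the form \<open>x\<^sub>0\<^sup>r\<^sup>-\<^sup>1x\<^sub>1\<close> and the second convergent (beginning with \<open>x\<^sub>0\<close>, ending with \<open>x\<^sub>1\<close>).
  Scanning the word from the left, this count obeys a linear recursion coupled with the number of
  splittings whose second part merely ends with \<open>x\<^sub>1\<close>; the latter doubles at every \<open>x\<^sub>0\<close> and grows
  affinely at every \<open>x\<^sub>1\<close>, which produces the powers of two in \<open>C\<close>.\<close>

fun unshuffles :: "'a list \<Rightarrow> ('a list \<times> 'a list) list" where
  "unshuffles [] = [([], [])]"
| "unshuffles (c # u) =
     map (\<lambda>(p, q). (c # p, q)) (unshuffles u) @ map (\<lambda>(p, q). (p, c # q)) (unshuffles u)"

lemma shuf_Nil_right [simp]: "shuf p [] = [p]"
  by (cases p) auto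

lemma length_shuf: "x \<in> set (shuf p q) \<Longrightarrow> length x = length p + length q"
  by (induction p q arbitrary: x rule: shuf.induct) auto

lemma count_list_map_Cons:
  "count_list (map ((#) a) xs) (c # u) = (if a = c then count_list xs u else 0)"
  by (induction xs) auto

lemma count_list_map_Cons_left:
  "count_list (map (\<lambda>(p, q). (c # p, q)) xs) (p', q') =
     (case p' of [] \<Rightarrow> 0 | d # r \<Rightarrow> if d = c then count_list xs (r, q') else 0)"
  by (induction xs) (auto split: list.splits)

lemma count_list_map_Cons_right:
  "count_list (map (\<lambda>(p, q). (p, c # q)) xs) (p', q') =
     (case q' of [] \<Rightarrow> 0 | d # r \<Rightarrow> if d = c then count_list xs (p', r) else 0)"
  by (induction xs) (auto split: list.splits)

lemma count_shuf_eq_count_unshuffles: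
  "count_list (shuf p q) u = count_list (unshuffles u) (p, q)"
proof (induction u arbitrary: p q)
  case Nil
  show ?case
  proof (cases "p = [] \<and> q = []")
    case False
    then have "[] \<notin> set (shuf p q)" using length_shuf by fastforce
    then show ?thesis using False by (auto simp: count_list_0_iff)
  qed simp
next
  case (Cons c u)
  have IH_left: "count_list (unshuffles u) ([], q) = (if q = u then 1 else 0)" for q
    by (simp add: Cons.IH[of "[]" q, symmetric])
  have IH_right: "count_list (unshuffles u) (p, []) = (if p = u then 1 else 0)" for p
    by (simp add: Cons.IH[of p "[]", symmetric])
  show ?case
  proof (cases p)
    case Nil
    then show ?thesis using IH_left
      by (cases q) (auto simp: count_list_map_Cons_left count_list_map_Cons_right)
  next
    case (Cons a p')
    then show ?thesis using IH_right Cons.IH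
      by (cases q) (auto simp: count_list_map_Cons_left count_list_map_Cons_right count_list_map_Cons)
  qed
qed

lemma unshuffles_length_count:
  "(p, q) \<in> set (unshuffles u) \<Longrightarrow>
     length p + length q = length u \<and> count_list p c + count_list q c = count_list u c"
  by (induction u arbitrary: p q) auto

definition count_splits :: "'a list \<Rightarrow> ('a list \<times> 'a list \<Rightarrow> bool) \<Rightarrow> nat" where
  "count_splits u P = length (filter P (unshuffles u))"

lemma count_splits_Nil: "count_splits [] P = (if P ([], []) then 1 else 0)"
  by (simp add: count_splits_def)

lemma count_splits_Cons:
  "count_splits (c # u) P =
     count_splits u (\<lambda>(p, q). P (c # p, q)) + count_splits u (\<lambda>(p, q). P (p, c # q))"
  by (simp add: count_splits_def filter_map comp_def split_def)

lemma count_splits_False [simp]: "count_splits u (\<lambda>(p, q). False) = 0"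
  by (simp add: count_splits_def)

lemma count_splits_disj:
  assumes "\<And>x. \<not> (P x \<and> R x)"
  shows "count_splits u (\<lambda>x. P x \<or> R x) = count_splits u P + count_splits u R"
proof -
  have "length (filter (\<lambda>x. P x \<or> R x) xs) = length (filter P xs) + length (filter R xs)" for xs
    using assms by (induction xs) auto
  then show ?thesis unfolding count_splits_def .
qed

lemma count_splits_left_Nil:
  "count_splits u (\<lambda>(p, q). p = [] \<and> R q) = (if R u then 1 else 0)"
  by (induction u arbitrary: R) (simp_all add: count_splits_Nil count_splits_Cons)

lemma count_splits_right_Nil:
  "count_splits u (\<lambda>(p, q). q = [] \<and> R p) = (if R u then 1 else 0)"
  by (induction u arbitrary: R) (simp_all add: count_splits_Nil count_splits_Cons)

fun depth_one :: "bool list \<Rightarrow> bool" where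
  "depth_one [] = False"
| "depth_one (c # p) = (if c then p = [] else depth_one p)"

definition ends_x1 :: "bool list \<Rightarrow> bool" where
  "ends_x1 q \<longleftrightarrow> q \<noteq> [] \<and> last q"

definition convergent :: "bool list \<Rightarrow> bool" where
  "convergent q \<longleftrightarrow> q \<noteq> [] \<and> \<not> hd q \<and> last q"

lemma convergent_x0 [simp]: "convergent (False # q) = ends_x1 q"
  by (simp add: convergent_def ends_x1_def)

lemma convergent_x1 [simp]: "\<not> convergent (True # q)"
  by (simp add: convergent_def)

lemma ends_x1_x0 [simp]: "ends_x1 (False # q) = ends_x1 q"
  by (simp add: ends_x1_def)

definition splits_conv :: "bool list \<Rightarrow> nat" where
  "splits_conv u = count_splits u (\<lambda>(p, q). depth_one p \<and> convergent q)"

definition splits_end :: "bool list \<Rightarrow> nat" where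
  "splits_end u = count_splits u (\<lambda>(p, q). depth_one p \<and> ends_x1 q)"

lemma splits_end_Nil: "splits_end [] = 0"
  by (simp add: splits_end_def count_splits_Nil)

lemma splits_conv_x1: "splits_conv (True # u) = (if convergent u then 1 else 0)"
  by (simp add: splits_conv_def count_splits_Cons count_splits_left_Nil)

lemma splits_conv_x0: "splits_conv (False # u) = splits_conv u + splits_end u"
  by (simp add: splits_conv_def splits_end_def count_splits_Cons)

lemma splits_end_x0: "splits_end (False # u) = 2 * splits_end u"
  by (simp add: splits_end_def count_splits_Cons)

lemma splits_end_x1:
  "splits_end (True # u) = (if ends_x1 u then 1 else 0) + splits_end u + (if depth_one u then 1 else 0)"
proof -
  have "count_splits u (\<lambda>(p, q). depth_one p \<and> ends_x1 (True # q)) =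
        count_splits u (\<lambda>(p, q). q = [] \<and> depth_one p) + splits_end u"
    unfolding splits_end_def
    by (subst count_splits_disj[symmetric]) (auto simp: ends_x1_def intro!: arg_cong[where f = "count_splits u"])
  then show ?thesis
    by (simp add: splits_end_def count_splits_Cons count_splits_left_Nil count_splits_right_Nil)
qed

lemma splits_end_x0_power: "splits_end (replicate m False @ u) = 2 ^ m * splits_end u"
  by (induction m) (auto simp: splits_end_x0)

lemma splits_conv_x0_power:
  "splits_conv (replicate m False @ u) + splits_end u = splits_conv u + 2 ^ m * splits_end u"
  by (induction m) (auto simp: splits_conv_x0 splits_end_x0_power)

lemma enc_Nil [simp]: "enc [] = []"
  by (simp add: enc_def)

lemma enc_Cons: "enc (a # t) = replicate (a - 1) False @ True # enc t"
  by (simp add: enc_def)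

lemma enc_eq_Nil_iff [simp]: "enc t = [] \<longleftrightarrow> t = []"
  by (cases t) (auto simp: enc_Cons)

lemma length_enc: "\<forall>x\<in>set t. 0 < x \<Longrightarrow> length (enc t) = sum_list t"
  by (induction t) (auto simp: enc_Cons)

lemma count_list_replicate_other: "x \<noteq> y \<Longrightarrow> count_list (replicate m x) y = 0"
  by (induction m) auto

lemma count_x1_enc: "count_list (enc t) True = length t"
  by (induction t) (auto simp: enc_Cons count_list_replicate_other)

lemma depth_one_iff: "depth_one p \<longleftrightarrow> (\<exists>m. p = replicate m False @ [True])"
proof
  show "depth_one p \<Longrightarrow> \<exists>m. p = replicate m False @ [True]"
  proof (induction p)
    case (Cons c p)
    then show ?case
      by (cases c) (auto intro: exI[of _ 0] exI[of _ "Suc m" for m])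
  qed simp
  show "\<exists>m. p = replicate m False @ [True] \<Longrightarrow> depth_one p"
  proof (elim exE)
    show "p = replicate m False @ [True] \<Longrightarrow> depth_one p" for m
      by (induction m arbitrary: p) auto
  qed
qed

lemma depth_one_enc: "depth_one (enc t) \<longleftrightarrow> length t = 1"
proof -
  have "depth_one (replicate m False @ True # v) \<longleftrightarrow> v = []" for m v
    by (induction m) auto
  then show ?thesis by (cases t) (auto simp: enc_Cons)
qed

lemma ends_x1_enc: "ends_x1 (enc t) \<longleftrightarrow> t \<noteq> []"
  by (induction t) (auto simp: ends_x1_def enc_Cons last_append)

lemma convergent_enc:
  assumes "\<forall>x\<in>set t. 0 < x"
  shows "convergent (enc t) \<longleftrightarrow> t \<noteq> [] \<and> 2 \<le> hd t"
proof (cases t)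
  case (Cons a t')
  have "last (enc t)" using ends_x1_enc[of t] Cons by (simp add: ends_x1_def)
  moreover have "\<not> hd (enc t) \<longleftrightarrow> 2 \<le> a"
    using assms Cons by (cases "a - 1") (auto simp: enc_Cons)
  ultimately show ?thesis using Cons by (auto simp: convergent_def)
qed (simp add: convergent_def)

lemma enc_surj:
  assumes "q = [] \<or> last q"
  shows "\<exists>s. (\<forall>x\<in>set s. 0 < x) \<and> enc s = q"
  using assms
proof (induction q)
  case Nil
  show ?case by (intro exI[of _ "[]"]) simp
next
  case (Cons c q)
  show ?case
  proof (cases c)
    case True
    have "q = [] \<or> last q" using Cons.prems True by (cases q) auto
    then obtain s where "\<forall>x\<in>set s. 0 < x" "enc s = q" using Cons.IH by blast
    then show ?thesis using True by (intro exI[of _ "1 # s"]) (simp add: enc_Cons)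
  next
    case False
    then have "q \<noteq> [] \<and> last q" using Cons.prems by (cases q) auto
    then obtain b s where s: "\<forall>x\<in>set (b # s). 0 < x" "enc (b # s) = q"
      using Cons.IH by (metis enc_eq_Nil_iff neq_Nil_conv)
    then have "enc (Suc b # s) = c # q" using False by (cases b) (auto simp: enc_Cons)
    then show ?thesis using s by (intro exI[of _ "Suc b # s"]) auto
  qed
qed

lemma replicate_x0_x1_inj:
  "replicate m False @ True # x = replicate m' False @ True # y \<Longrightarrow> m = m' \<and> x = y"
proof (induction m arbitrary: m')
  case 0
  then show ?case by (cases m') auto
next
  case (Suc m)
  then show ?case by (cases m') auto
qed

lemma enc_inj:
  "\<forall>x\<in>set s. 0 < x \<Longrightarrow> \<forall>x\<in>set s'. 0 < x \<Longrightarrow> enc s = enc s' \<Longrightarrow> s = s'"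
proof (induction s arbitrary: s')
  case (Cons a s)
  then obtain a' s'' where s': "s' = a' # s''"
    by (metis enc_eq_Nil_iff list.distinct(1) neq_Nil_conv)
  then have "a - 1 = a' - 1 \<and> enc s = enc s''"
    using Cons.prems(3) by (intro replicate_x0_x1_inj) (simp add: enc_Cons)
  then show ?case using Cons.prems Cons.IH[of s''] s' by auto
qed (metis enc_eq_Nil_iff)

lemma length_le_sum_list: "\<forall>x\<in>set t. 0 < (x::nat) \<Longrightarrow> length t \<le> sum_list t"
  by (induction t) auto

lemma Cf_eq: "Cf t = (\<Sum>j=1..length t. 2 ^ (sum_list (take j t) - j)) + 2 ^ (sum_list t - length t)"
  by (simp add: Cf_def)

lemma Cf_Cons:
  assumes "1 \<le> a" and pos: "\<forall>x\<in>set t. 0 < x"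
  shows "Cf (a # t) = 2 ^ (a - 1) * (1 + Cf t)"
proof -
  let ?h = "\<lambda>i. (2::int) ^ (sum_list (take i t) - i)"
  have shift: "(2::int) ^ (sum_list (take (Suc i) (a # t)) - Suc i) = 2 ^ (a - 1) * ?h i"
    if "i \<le> length t" for i
  proof -
    have "length (take i t) \<le> sum_list (take i t)"
      using pos by (intro length_le_sum_list) (auto dest: in_set_takeD)
    then have "sum_list (take (Suc i) (a # t)) - Suc i = (a - 1) + (sum_list (take i t) - i)"
      using that \<open>1 \<le> a\<close> by simp
    then show ?thesis by (simp add: power_add)
  qed
  have "(\<Sum>j=1..length (a # t). (2::int) ^ (sum_list (take j (a # t)) - j)) =
        (\<Sum>i=0..length t. 2 ^ (sum_list (take (Suc i) (a # t)) - Suc i))"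
    by (simp add: sum.atLeast_Suc_atMost_Suc_shift del: sum.cl_ivl_Suc)
  also have "\<dots> = (\<Sum>i=0..length t. 2 ^ (a - 1) * ?h i)"
    by (intro sum.cong refl shift) simp
  also have "\<dots> = 2 ^ (a - 1) * (1 + (\<Sum>i=1..length t. ?h i))"
    by (simp add: sum_distrib_left[symmetric] sum.atLeast_Suc_atMost)
  finally have sum_shift: "(\<Sum>j=1..length (a # t). (2::int) ^ (sum_list (take j (a # t)) - j)) =
                           2 ^ (a - 1) * (1 + (\<Sum>i=1..length t. ?h i))" .
  have "sum_list (a # t) - length (a # t) = (a - 1) + (sum_list t - length t)"
    using length_le_sum_list[OF pos] \<open>1 \<le> a\<close> by simp
  then show ?thesis
    unfolding Cf_eq[of "a # t"] Cf_eq[of t] sum_shift by (simp add: power_add algebra_simps)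
qed

lemma splits_end_x1_enc:
  "\<forall>x\<in>set t. 0 < x \<Longrightarrow> t \<noteq> [] \<Longrightarrow> int (splits_end (True # enc t)) = 1 + Cf (butlast t)"
proof (induction t)
  case (Cons b t)
  have "splits_end (True # enc (b # t)) = 1 + splits_end (enc (b # t)) + (if t = [] then 1 else 0)"
    by (simp add: splits_end_x1 ends_x1_enc depth_one_enc)
  also have "splits_end (enc (b # t)) = 2 ^ (b - 1) * splits_end (True # enc t)"
    by (simp add: enc_Cons splits_end_x0_power)
  finally have step: "int (splits_end (True # enc (b # t))) =
                      1 + 2 ^ (b - 1) * int (splits_end (True # enc t)) + (if t = [] then 1 else 0)"
    by simp
  show ?case
  proof (cases "t = []")
    case True
    then show ?thesis
      unfolding step by (simp add: splits_end_x1 splits_end_Nil ends_x1_def Cf_def)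
  next
    case False
    then have "int (splits_end (True # enc (b # t))) = 1 + 2 ^ (b - 1) * (1 + Cf (butlast t))"
      using Cons step by simp
    also have "\<dots> = 1 + Cf (b # butlast t)"
      using Cons.prems by (subst Cf_Cons) (auto dest: in_set_butlastD)
    finally show ?thesis using False by simp
  qed
qed simp

lemma splits_conv_enc:
  assumes pos: "\<forall>x\<in>set w. 0 < x" and "2 \<le> length w"
  shows "int (splits_conv (enc w)) =
           Cf (butlast w) - Cf (tl (butlast w)) - (if w ! 1 = 1 then 1 else 0)"
proof -
  obtain a b t where w: "w = a # b # t"
    using \<open>2 \<le> length w\<close> by (metis One_nat_def Suc_1 Suc_le_length_iff)
  let ?e = "int (splits_end (True # enc (b # t)))"
  have "splits_conv (enc w) + splits_end (True # enc (b # t)) =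
        splits_conv (True # enc (b # t)) + 2 ^ (a - 1) * splits_end (True # enc (b # t))"
    unfolding w enc_Cons[of a] by (rule splits_conv_x0_power)
  then have "int (splits_conv (enc w)) + ?e = int (splits_conv (True # enc (b # t))) + 2 ^ (a - 1) * ?e"
    by (metis of_nat_add of_nat_mult of_nat_numeral of_nat_power)
  then have "int (splits_conv (enc w)) =
             int (splits_conv (True # enc (b # t))) + (2 ^ (a - 1) - 1) * ?e"
    by (simp add: algebra_simps)
  moreover have "int (splits_conv (True # enc (b # t))) = (if 2 \<le> b then 1 else 0)"
    using pos w by (simp add: splits_conv_x1 convergent_enc)
  moreover have "?e = 1 + Cf (butlast (b # t))"
    using pos w by (intro splits_end_x1_enc) auto
  moreover have "Cf (a # butlast (b # t)) = 2 ^ (a - 1) * (1 + Cf (butlast (b # t)))"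
    using pos w by (intro Cf_Cons) (auto dest: in_set_butlastD)
  ultimately show ?thesis
    using pos w by (auto simp: algebra_simps)
qed

lemma sum_fun_apply: "(\<Sum>x\<in>A. f x) w = (\<Sum>x\<in>A. f x w :: 'b::comm_monoid_add)"
  by (induction A rule: infinite_finite_induct) auto

lemma sum_scal_zb_apply: "finite B \<Longrightarrow> (\<Sum>t\<in>B. scal (c t) (zb t)) w = (if w \<in> B then c w else 0)"
  by (simp add: sum_fun_apply scal_def zb_def if_distrib[of "(*) _"] sum.delta' cong: if_cong)

lemma sum_zb_apply: "finite B \<Longrightarrow> (\<Sum>t\<in>B. zb t) w = (if w \<in> B then 1 else 0)"
  by (simp add: sum_fun_apply zb_def sum.delta')

lemma finite_lists_sum_list_le: "finite {t :: nat list. length t = m \<and> sum_list t \<le> n}"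
proof (rule finite_subset)
  show "{t. length t = m \<and> sum_list t \<le> n} \<subseteq> {t. set t \<subseteq> {..n} \<and> length t = m}"
    using member_le_sum_list by fastforce
qed (simp add: finite_lists_length_eq)

lemma sum_count_list_image:
  assumes "inj_on g A" and "finite A"
  shows "(\<Sum>x\<in>A. count_list xs (g x)) = length (filter (\<lambda>z. z \<in> g ` A) xs)"
proof -
  have "(\<Sum>x\<in>A. count_list xs (g x)) = (\<Sum>y\<in>g ` A. count_list (filter (\<lambda>z. z \<in> g ` A) xs) y)"
  proof -
    have "count_list xs (g x) = count_list (filter (\<lambda>z. z \<in> g ` A) xs) (g x)" if "x \<in> A" for x
      using that by (induction xs) auto
    then show ?thesis by (simp add: sum.reindex[OF assms(1)])
  qed
  also have "\<dots> = length (filter (\<lambda>z. z \<in> g ` A) xs)"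
    using assms(2) by (intro sum_count_set) auto
  finally show ?thesis .
qed

definition shuffle_pairs :: "nat \<Rightarrow> nat \<Rightarrow> (nat \<times> nat list) set" where
  "shuffle_pairs k n = {(r, s). r \<ge> 1 \<and> length s = k - 1 \<and> (\<forall>x\<in>set s. x \<ge> 1)
                                 \<and> hd s \<ge> 2 \<and> r + sum_list s = n}"

lemma finite_shuffle_pairs: "finite (shuffle_pairs k n)"
proof (rule finite_subset)
  show "shuffle_pairs k n \<subseteq> {..n} \<times> {t. length t = k - 1 \<and> sum_list t \<le> n}"
    by (auto simp: shuffle_pairs_def)
qed (simp add: finite_lists_sum_list_le)

lemma shuffle_pairs_unshuffle_iff:
  assumes "2 \<le> k" and pos: "\<forall>x\<in>set w. 0 < x" and split: "(p, q) \<in> set (unshuffles (enc w))"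
  shows "(p, q) \<in> (\<lambda>(r, s). (enc [r], enc s)) ` shuffle_pairs k n \<longleftrightarrow>
           length w = k \<and> sum_list w = n \<and> depth_one p \<and> convergent q"
proof -
  have len: "length p + length q = sum_list w"
    and cnt: "count_list p True + count_list q True = length w"
    using unshuffles_length_count[OF split] pos by (auto simp: length_enc count_x1_enc)
  show ?thesis
  proof
    assume "(p, q) \<in> (\<lambda>(r, s). (enc [r], enc s)) ` shuffle_pairs k n"
    then obtain r s where p: "p = enc [r]" and q: "q = enc s" and "(r, s) \<in> shuffle_pairs k n"
      by auto
    then have "0 < r" "\<forall>x\<in>set s. 0 < x" "length s = k - 1" "2 \<le> hd s" "r + sum_list s = n"
      by (auto simp: shuffle_pairs_def Suc_le_eq)
    then show "length w = k \<and> sum_list w = n \<and> depth_one p \<and> convergent q"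
      using len cnt p q \<open>2 \<le> k\<close>
      by (auto simp: length_enc count_x1_enc depth_one_enc convergent_enc)
  next
    assume w: "length w = k \<and> sum_list w = n \<and> depth_one p \<and> convergent q"
    then obtain m where p: "p = enc [Suc m]"
      by (auto simp: depth_one_iff enc_Cons)
    obtain s where s: "\<forall>x\<in>set s. 0 < x" "q = enc s"
      using w enc_surj[of q] by (auto simp: convergent_def)
    then have "length s = k - 1" "Suc m + sum_list s = n" "s \<noteq> [] \<and> 2 \<le> hd s"
      using len cnt w p by (auto simp: length_enc count_x1_enc convergent_enc)
    then have "(Suc m, s) \<in> shuffle_pairs k n"
      using s by (auto simp: shuffle_pairs_def Suc_le_eq)
    then show "(p, q) \<in> (\<lambda>(r, s). (enc [r], enc s)) ` shuffle_pairs k n"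
      using p s by force
  qed
qed

lemma shuffle_pairs_coeff:
  assumes "2 \<le> k"
  shows "(\<Sum>(r, s)\<in>shuffle_pairs k n. shz [r] s) w =
           (if (\<forall>x\<in>set w. 0 < x) \<and> length w = k \<and> sum_list w = n
            then int (splits_conv (enc w)) else 0)"
proof (cases "\<forall>x\<in>set w. 0 < x")
  case pos: True
  let ?A = "shuffle_pairs k n" and ?g = "\<lambda>(r, s). (enc [r], enc s)" and ?u = "enc w"
  have "inj_on ?g ?A"
    by (rule inj_onI) (auto simp: shuffle_pairs_def Suc_le_eq dest: enc_inj)
  then have "(\<Sum>(r, s)\<in>?A. shz [r] s) w = int (length (filter (\<lambda>z. z \<in> ?g ` ?A) (unshuffles ?u)))"
    using finite_shuffle_pairs
    by (simp add: sum_fun_apply shz_def pos count_shuf_eq_count_unshuffles split_def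
             flip: sum_count_list_image)
  also have "filter (\<lambda>z. z \<in> ?g ` ?A) (unshuffles ?u) =
             filter (\<lambda>(p, q). (length w = k \<and> sum_list w = n) \<and> depth_one p \<and> convergent q) (unshuffles ?u)"
  proof (rule filter_cong[OF refl])
    fix z assume z: "z \<in> set (unshuffles ?u)"
    obtain p q where "z = (p, q)" by fastforce
    then show "z \<in> ?g ` ?A \<longleftrightarrow>
                 (case z of (p, q) \<Rightarrow> (length w = k \<and> sum_list w = n) \<and> depth_one p \<and> convergent q)"
      using shuffle_pairs_unshuffle_iff[OF assms pos] z by (simp only: case_prod_conv conj_assoc)
  qed
  finally show ?thesis
    using pos by (auto simp: splits_conv_def count_splits_def)
next
  case False
  then have "shz u v w = 0" for u v by (auto simp: shz_def)
  with False show ?thesis by (auto simp: sum_fun_apply split_def)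
qed

theorem theorem2p6:
  fixes k n :: nat
  assumes "k \<ge> 2" and "n \<ge> k + 1"
  shows "(\<Sum>(r, s) \<in> {(r, s). r \<ge> 1 \<and> length s = k - 1 \<and> (\<forall>x\<in>set s. x \<ge> 1)
                        \<and> hd s \<ge> 2 \<and> r + sum_list s = n}. shz [r] s)
       = (\<Sum>t \<in> {t. length t = k \<and> (\<forall>x\<in>set t. x \<ge> 1) \<and> sum_list t = n}.
            scal (Cf (take (k - 1) t) - Cf (drop 1 (take (k - 1) t))) (zb t))
         - (\<Sum>t \<in> {t. length t = k \<and> (\<forall>x\<in>set t. x \<ge> 1) \<and> t ! 1 = 1 \<and> sum_list t = n}.
            zb t)"
    (is "?L = ?R")
proof
  fix w
  let ?B = "{t. length t = k \<and> (\<forall>x\<in>set t. x \<ge> 1) \<and> sum_list t = n}"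
  have "finite ?B" "finite {t. length t = k \<and> (\<forall>x\<in>set t. x \<ge> 1) \<and> t ! 1 = 1 \<and> sum_list t = n}"
    by (auto intro: finite_subset[OF _ finite_lists_sum_list_le[of k n]])
  then have rhs: "?R w = (if w \<in> ?B
                          then Cf (butlast w) - Cf (tl (butlast w)) - (if w ! 1 = 1 then 1 else 0) else 0)"
    by (auto simp: sum_scal_zb_apply sum_zb_apply butlast_conv_take drop_Suc)
  have "w \<in> ?B \<longleftrightarrow> (\<forall>x\<in>set w. 0 < x) \<and> length w = k \<and> sum_list w = n"
    by (auto simp: Suc_le_eq)
  then show "?L w = ?R w"
    using shuffle_pairs_coeff[OF \<open>k \<ge> 2\<close>, unfolded shuffle_pairs_def] splits_conv_enc[of w] \<open>k \<ge> 2\<close>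
    unfolding rhs by auto
qed

end
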